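(* Let $\mathcal{X}_{obs}\subset\mathbb{R}^n$ be a nonempty compact convex set. Let $x_0^{plan},\dots,x_N^{plan}\in\mathbb{R}^n$ with $x_{j}^{plan}\ne x_{j-1}^{plan}$, let $0=t_0<t_1<\dots<t_N=T$, and let $x^{plan}(t)$ be the piecewise-linear path with $x^{plan}(t_j)=x_j^{plan}$, linear on each $[t_{j-1},t_j]$; let $\mathcal{S}_j$ be the segment from $x_{j-1}^{plan}$ to $x_j^{plan}$ and assume $\mathcal{S}_j\cap\mathcal{X}_{obs}=\emptyset$ for all $j$. Let $\pmb{x}^{sys}(t)=x^{plan}(t)+R^{1/2}W(t)$, $t\in[0,T]$, where $W$ is a standard $n$-dimensional Brownian motion from the origin and $R$ is symmetric positive definite (equivalently, $d\pmb{x}^{sys}=v_j^{plan}dt+R^{1/2}dW$ on $[t_{j-1},t_j)$ with $v_j^{plan}(t_j-t_{j-1})=x_j^{plan}-x_{j-1}^{plan}$, and $\pmb{x}^{sys}(0)=x_0^{plan}$). For each $j$, let $(y_1^*,y_2^* )$ minimize $\|y_1-y_2\|$ over $y_1\in\mathcal{X}_{obs}$, $y_2\in\mathcal{S}_j$, set $d_j=\|y_1^*-y_2^*\|$, $a_j=(y_1^*-y_2^* )/d_j$, $\pmb{w}_j(t)=a_j^T(\pmb{x}^{sys}(t)-x^{plan}(t))$, $\mathcal{E}_j=\{\max_{t\in[t_{j-1},t_j]}\pmb{w}_j(t)\ge d_j\}$ and $p_j=P(\mathcal{E}_j)$. For each $j$ choose a discretization $t_{j-1}=\hat t_j^0<\dots<\hat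 t_j^{r_j}=t_j$, let $\mathcal{D}_j=\bigcap_{i=0}^{r_j}\{\pmb{w}_j(\hat t_j^i)<d_j\}$ and $p_{j,j+1}^{LB}=1-P(\mathcal{D}_j)-P(\mathcal{D}_{j+1})+P(\mathcal{D}_j\cap\mathcal{D}_{j+1})$. Then the continuous-time risk $\mathcal{R}=P\big(\exists t\in[0,T]:\ \pmb{x}^{sys}(t)\in\mathcal{X}_{obs}\big)$ satisfies $$\mathcal{R}\le\sum_{j=1}^N p_j\quad\text{and}\quad \mathcal{R}\le\sum_{j=1}^N p_j-\sum_{j=1}^{N-1}p_{j,j+1}^{LB}.$$
   Context: $p_j$ can be evaluated as $P(\pmb{w}_j(t_{j-1})\ge d_j)+2P(\pmb{w}_j(t_{j-1})<d_j,\ \pmb{w}_j(t_j)\ge d_j)$, and $p_{j,j+1}^{LB}$ is a lower bound for $P(\mathcal{E}_j\cap\mathcal{E}_{j+1})$; the second inequality is the paper's "second-order risk bound" and the first its "first-order risk bound". *)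

theory Defs
  imports "HOL-Probability.Probability"
begin

definition std_brownian_motion :: "'a measure \<Rightarrow> (real \<Rightarrow> 'a \<Rightarrow> real^'n) \<Rightarrow> bool" where
  "std_brownian_motion M W \<longleftrightarrow>
     prob_space M \<and>
     (\<forall>s\<ge>0. W s \<in> borel_measurable M) \<and>
     (\<forall>\<omega>\<in>space M. W 0 \<omega> = 0 \<and> continuous_on {0..} (\<lambda>s. W s \<omega>)) \<and>
     (\<forall>(ts :: nat \<Rightarrow> real) (k :: nat). 0 \<le> ts 0 \<and> (\<forall>m<k. ts m < ts (Suc m)) \<longrightarrow>
        prob_space.indep_vars M (\<lambda>_. borel)
          (\<lambda>(i, m) \<omega>. W (ts (Suc m)) \<omega> $ i - W (ts m) \<omega> $ i) (UNIV \<times> {..<k}) \<and>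
        (\<forall>i. \<forall>m<k. distributed M lborel (\<lambda>\<omega>. W (ts (Suc m)) \<omega> $ i - W (ts m) \<omega> $ i)
              (\<lambda>x. ennreal (normal_density 0 (sqrt (ts (Suc m) - ts m)) x))))"

definition sym_pos_def :: "real^'n^'n \<Rightarrow> bool" where
  "sym_pos_def A \<longleftrightarrow> transpose A = A \<and> (\<forall>x. x \<noteq> 0 \<longrightarrow> x \<bullet> (A *v x) > 0)"

text \<open>w_j(s) = a^T (x_sys(s) - x_plan(s)) = a^T R^(1/2) W(s)\<close>
definition wproc :: "real^'n^'n \<Rightarrow> (real \<Rightarrow> 'a \<Rightarrow> real^'n) \<Rightarrow> real^'n \<Rightarrow> real \<Rightarrow> 'a \<Rightarrow> real" where
  "wproc Rh W a s \<omega> = a \<bullet> (Rh *v W s \<omega>)"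

definition exc_event :: "'a measure \<Rightarrow> real^'n^'n \<Rightarrow> (real \<Rightarrow> 'a \<Rightarrow> real^'n) \<Rightarrow> real^'n \<Rightarrow> real \<Rightarrow> real \<Rightarrow> real \<Rightarrow> 'a set" where
  "exc_event M Rh W a d lo hi = {\<omega>\<in>space M. Sup ((\<lambda>s. wproc Rh W a s \<omega>) ` {lo..hi}) \<ge> d}"

definition disc_event :: "'a measure \<Rightarrow> real^'n^'n \<Rightarrow> (real \<Rightarrow> 'a \<Rightarrow> real^'n) \<Rightarrow> real^'n \<Rightarrow> real \<Rightarrow> (nat \<Rightarrow> real) \<Rightarrow> nat \<Rightarrow> 'a set" where
  "disc_event M Rh W a d th r = {\<omega>\<in>space M. \<forall>i\<le>r. wproc Rh W a (th i) \<omega> < d}"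

end

theory Submission
  imports Defs
begin

text \<open>Let \<open>y\<^sub>1 \<in> X\<^sub>o\<^sub>b\<^sub>s\<close>, \<open>y\<^sub>2 \<in> S\<^sub>j\<close> be a closest pair. By convexity of both sets, the
  hyperplane with unit normal \<open>a\<^sub>j = (y\<^sub>1 - y\<^sub>2) / d\<^sub>j\<close> separates them with margin \<open>d\<^sub>j\<close>:
  \<open>a\<^sub>j \<bullet> (z - y) \<ge> d\<^sub>j\<close> for every obstacle point \<open>z\<close> and segment point \<open>y\<close>. A collision at a
  time \<open>s \<in> [t\<^sub>j\<^sub>-\<^sub>1, t\<^sub>j]\<close>, where the plan lies on \<open>S\<^sub>j\<close>, therefore forces \<open>w\<^sub>j(s) \<ge> d\<^sub>j\<close>, so the
  collision event is covered by \<open>E\<^sub>1, \<dots>, E\<^sub>N\<close>. The first bound is the union bound. For the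
  second, \<open>P(\<Union> E\<^sub>j) \<le> \<Sum> P(E\<^sub>j) - \<Sum> P(E\<^sub>j \<inter> E\<^sub>j\<^sub>+\<^sub>1)\<close> holds for any chain of events, and since the
  complement of \<open>D\<^sub>j\<close> lies inside \<open>E\<^sub>j\<close>, \<open>p\<^sup>L\<^sup>B\<^sub>j\<^sub>,\<^sub>j\<^sub>+\<^sub>1 = P(D\<^sub>j\<^sup>c \<inter> D\<^sub>j\<^sub>+\<^sub>1\<^sup>c) \<le> P(E\<^sub>j \<inter> E\<^sub>j\<^sub>+\<^sub>1)\<close>.\<close>

lemma lift_Suc_mono_le_upto:
  fixes f :: "nat \<Rightarrow> 'a::order"
  assumes "\<And>k. k < n \<Longrightarrow> f k \<le> f (Suc k)" "i \<le> j" "j \<le> n"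
  shows "f i \<le> f j"
  using assms(2,3) by (induction j rule: dec_induct) (auto intro: order_trans[OF _ assms(1)])

lemma ex_partition_interval:
  fixes t :: "nat \<Rightarrow> real"
  assumes "1 \<le> N" "t 0 \<le> s" "s \<le> t N"
  shows "\<exists>j\<in>{1..N}. s \<in> {t (j - 1)..t j}"
  using assms
proof (induction N)
  case 0
  then show ?case by simp
next
  case (Suc N)
  show ?case
  proof (cases "1 \<le> N \<and> s \<le> t N")
    case True
    then show ?thesis
      using Suc by fastforce
  next
    case False
    then have "s \<in> {t N..t (Suc N)}"
      using Suc.prems by (cases N) auto
    then show ?thesis
      by (intro bexI[of _ "Suc N"]) auto
  qed
qed

lemma piecewise_linear_path_in_segment:
  fixes x :: "real \<Rightarrow> 'a::real_vector" and p :: "nat \<Rightarrow> 'a" and t :: "nat \<Rightarrow> real"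
  assumes "1 \<le> N" "t 0 \<le> s" "s \<le> t N"
    and "\<forall>j\<in>{1..N}. \<forall>s\<in>{t (j - 1)..t j}.
           x s = p (j - 1) + ((s - t (j - 1)) / (t j - t (j - 1))) *\<^sub>R (p j - p (j - 1))"
  obtains j where "j \<in> {1..N}" "s \<in> {t (j - 1)..t j}" "x s \<in> closed_segment (p (j - 1)) (p j)"
proof -
  obtain j where j: "j \<in> {1..N}" "s \<in> {t (j - 1)..t j}"
    using ex_partition_interval[OF assms(1-3)] by blast
  \<comment> \<open>No ordering of \<open>t\<close> is needed: if \<open>t (j - 1) = t j\<close>, division by zero makes \<open>u = 0\<close>.\<close>
  define u where "u = (s - t (j - 1)) / (t j - t (j - 1))"
  have "0 \<le> u" "u \<le> 1"
    using j(2) by (auto simp: u_def divide_le_eq_1)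
  moreover have "x s = (1 - u) *\<^sub>R p (j - 1) + u *\<^sub>R p j"
    using assms(4) j by (simp add: u_def algebra_simps)
  ultimately have "x s \<in> closed_segment (p (j - 1)) (p j)"
    by (auto simp: closed_segment_def)
  with j show thesis
    by (rule that)
qed

lemma closest_pair_separation:
  fixes X S :: "'a::real_inner set"
  assumes "convex X" "closed X" "convex S" "closed S" "X \<inter> S = {}"
    and "y1 \<in> X" "y2 \<in> S" "\<forall>z1\<in>X. \<forall>z2\<in>S. norm (y1 - y2) \<le> norm (z1 - z2)"
    and "z \<in> X" "y \<in> S"
  shows "norm (y1 - y2) \<le> ((1 / norm (y1 - y2)) *\<^sub>R (y1 - y2)) \<bullet> (z - y)"
proof -
  have "(y2 - y1) \<bullet> (z - y1) \<le> 0"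
    by (rule any_closest_point_dot[of X]) (use assms in \<open>auto simp: dist_norm norm_minus_commute\<close>)
  moreover have "(y1 - y2) \<bullet> (y - y2) \<le> 0"
    by (rule any_closest_point_dot[of S]) (use assms in \<open>auto simp: dist_norm\<close>)
  ultimately have "norm (y1 - y2)^2 \<le> (y1 - y2) \<bullet> (z - y)"
    by (simp add: power2_norm_eq_inner algebra_simps)
  moreover have "0 < norm (y1 - y2)"
    using assms(5-7) by auto
  ultimately show ?thesis
    unfolding inner_scaleR_left by (simp add: pos_le_divide_eq power2_eq_square)
qed

lemma closure_Rats_interval:
  fixes lo hi :: real
  assumes "lo < hi"
  shows "closure ({lo<..<hi} \<inter> \<rat>) = {lo..hi}"
  using assms by (subst closure_open_Int_superset) (auto simp: Rats_closure_real)

lemma cSup_image_closure: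
  fixes g :: "'b::topological_space \<Rightarrow> real"
  assumes "compact (closure A)" "continuous_on (closure A) g" "A \<noteq> {}"
  shows "Sup (g ` closure A) = Sup (g ` A)"
proof (rule antisym)
  have bdd: "bdd_above (g ` closure A)"
    using assms by (intro bounded_imp_bdd_above compact_imp_bounded compact_continuous_image)
  then have bddA: "bdd_above (g ` A)"
    by (rule bdd_above_mono) (auto intro: closure_subset[THEN subsetD])
  have "g ` closure A \<subseteq> {..Sup (g ` A)}"
    using assms(2) by (rule image_closure_subset) (use bddA in \<open>auto intro: cSUP_upper\<close>)
  then show "Sup (g ` closure A) \<le> Sup (g ` A)"
    using assms(3) by (intro cSUP_least) auto
  show "Sup (g ` A) \<le> Sup (g ` closure A)"
    using assms(3) bdd closure_subset by (intro cSUP_subset_mono) auto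
qed

lemma le_cSup_image_compact:
  fixes g :: "'b::topological_space \<Rightarrow> real"
  assumes "compact K" "continuous_on K g" "s \<in> K" "d \<le> g s"
  shows "d \<le> Sup (g ` K)"
  using assms
  by (meson bounded_imp_bdd_above compact_continuous_image compact_imp_bounded cSUP_upper order_trans)

lemma borel_measurable_Sup_continuous_paths:
  fixes X :: "real \<Rightarrow> 'a \<Rightarrow> real"
  assumes "lo < hi"
    and "\<And>s. s \<in> {lo..hi} \<Longrightarrow> X s \<in> borel_measurable M"
    and "\<And>\<omega>. \<omega> \<in> space M \<Longrightarrow> continuous_on {lo..hi} (\<lambda>s. X s \<omega>)"
  shows "(\<lambda>\<omega>. Sup ((\<lambda>s. X s \<omega>) ` {lo..hi})) \<in> borel_measurable M"
proof -
  define Q where "Q = {lo<..<hi} \<inter> \<rat>"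
  have Q: "closure Q = {lo..hi}"
    unfolding Q_def using assms(1) by (rule closure_Rats_interval)
  then have "Q \<noteq> {}"
    using assms(1) by auto
  have Q_sub: "Q \<subseteq> {lo..hi}"
    unfolding Q_def by auto
  have "(\<lambda>\<omega>. Sup ((\<lambda>s. X s \<omega>) ` Q)) \<in> borel_measurable M"
  proof (rule borel_measurable_cSUP)
    show "countable Q"
      unfolding Q_def by (simp add: countable_rat)
    show "X q \<in> borel_measurable M" if "q \<in> Q" for q
      using that Q_sub by (intro assms(2)) auto
    show "bdd_above ((\<lambda>s. X s \<omega>) ` Q)" if "\<omega> \<in> space M" for \<omega>
      using Q_sub compact_continuous_image[OF assms(3)[OF that]]
      by (intro bdd_above_mono[OF bounded_imp_bdd_above[OF compact_imp_bounded]]) auto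
  qed
  moreover have "Sup ((\<lambda>s. X s \<omega>) ` {lo..hi}) = Sup ((\<lambda>s. X s \<omega>) ` Q)" if "\<omega> \<in> space M" for \<omega>
    using cSup_image_closure[of Q "\<lambda>s. X s \<omega>"] assms(3)[OF that] \<open>Q \<noteq> {}\<close> unfolding Q by simp
  ultimately show ?thesis
    by (simp cong: measurable_cong)
qed

lemma continuous_on_wproc:
  assumes "continuous_on S (\<lambda>s. W s \<omega>)"
  shows "continuous_on S (\<lambda>s. wproc Rh W a s \<omega>)"
  unfolding wproc_def
  by (intro continuous_on_inner continuous_on_const continuous_on_compose2[OF matrix_vector_mult_linear_continuous_on assms]) auto

lemma borel_measurable_wproc:
  assumes "W s \<in> borel_measurable M"
  shows "(\<lambda>\<omega>. wproc Rh W a s \<omega>) \<in> borel_measurable M"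
proof -
  have "(\<lambda>x. a \<bullet> (Rh *v x)) \<in> borel_measurable borel"
    by (intro borel_measurable_continuous_onI continuous_intros)
  from measurable_compose[OF assms this] show ?thesis
    unfolding wproc_def .
qed

lemma exc_event_in_sets:
  assumes "0 \<le> lo" "lo < hi"
    and "\<And>s. 0 \<le> s \<Longrightarrow> W s \<in> borel_measurable M"
    and "\<And>\<omega>. \<omega> \<in> space M \<Longrightarrow> continuous_on {0..} (\<lambda>s. W s \<omega>)"
  shows "exc_event M Rh W a d lo hi \<in> sets M"
proof -
  have "(\<lambda>\<omega>. Sup ((\<lambda>s. wproc Rh W a s \<omega>) ` {lo..hi})) \<in> borel_measurable M"
    using assms by (intro borel_measurable_Sup_continuous_paths borel_measurable_wproc continuous_on_wproc)
      (auto intro: continuous_on_subset[OF assms(4)])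
  then show ?thesis
    unfolding exc_event_def by measurable
qed

lemma disc_event_in_sets:
  assumes "\<And>i. i \<le> r \<Longrightarrow> 0 \<le> th i"
    and "\<And>s. 0 \<le> s \<Longrightarrow> W s \<in> borel_measurable M"
  shows "disc_event M Rh W a d th r \<in> sets M"
proof -
  have pointwise: "{\<omega>\<in>space M. wproc Rh W a (th i) \<omega> < d} \<in> sets M" if "i \<in> {..r}" for i
  proof -
    have "(\<lambda>\<omega>. wproc Rh W a (th i) \<omega>) \<in> borel_measurable M"
      using that assms by (intro borel_measurable_wproc) auto
    then show ?thesis
      by measurable
  qed
  have "{\<omega>\<in>space M. \<forall>i\<in>{..r}. wproc Rh W a (th i) \<omega> < d} \<in> sets M"
    by (rule sets.sets_Collect_finite_All) (use pointwise in auto)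
  then show ?thesis
    by (simp only: disc_event_def Ball_def atMost_iff)
qed

lemma exc_event_if_hits_obstacle:
  assumes "\<And>z y. z \<in> X \<Longrightarrow> y \<in> S \<Longrightarrow> d \<le> a \<bullet> (z - y)"
    and "x \<in> S" "x + Rh *v W s \<omega> \<in> X" "s \<in> {lo..hi}"
    and "continuous_on {lo..hi} (\<lambda>s. W s \<omega>)" "\<omega> \<in> space M"
  shows "\<omega> \<in> exc_event M Rh W a d lo hi"
proof -
  have "d \<le> wproc Rh W a s \<omega>"
    using assms(1)[OF assms(3,2)] by (simp add: wproc_def)
  then have "d \<le> Sup ((\<lambda>s. wproc Rh W a s \<omega>) ` {lo..hi})"
    using assms(4,5) by (intro le_cSup_image_compact continuous_on_wproc) auto
  then show ?thesis
    using assms(6) by (simp add: exc_event_def)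
qed

lemma space_diff_disc_event_subset_exc_event:
  assumes "\<And>i. i \<le> r \<Longrightarrow> th i \<in> {lo..hi}"
    and "\<And>\<omega>. \<omega> \<in> space M \<Longrightarrow> continuous_on {lo..hi} (\<lambda>s. W s \<omega>)"
  shows "space M - disc_event M Rh W a d th r \<subseteq> exc_event M Rh W a d lo hi"
proof
  fix \<omega> assume \<omega>: "\<omega> \<in> space M - disc_event M Rh W a d th r"
  then obtain i where "i \<le> r" "d \<le> wproc Rh W a (th i) \<omega>"
    by (auto simp: disc_event_def not_less)
  then have "d \<le> Sup ((\<lambda>s. wproc Rh W a s \<omega>) ` {lo..hi})"
    using \<omega> assms by (intro le_cSup_image_compact continuous_on_wproc) auto
  then show "\<omega> \<in> exc_event M Rh W a d lo hi"
    using \<omega> by (simp add: exc_event_def)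
qed

lemma collision_subset_UN_exc_event:
  fixes xplan :: "real \<Rightarrow> real^'n" and xp :: "nat \<Rightarrow> real^'n" and t :: "nat \<Rightarrow> real"
  assumes "1 \<le> N" "t 0 = 0" "t N = T"
    and "\<forall>j\<in>{1..N}. \<forall>s\<in>{t (j - 1)..t j}.
           xplan s = xp (j - 1) + ((s - t (j - 1)) / (t j - t (j - 1))) *\<^sub>R (xp j - xp (j - 1))"
    and "\<And>j z y. j \<in> {1..N} \<Longrightarrow> z \<in> X \<Longrightarrow> y \<in> closed_segment (xp (j - 1)) (xp j) \<Longrightarrow> d j \<le> a j \<bullet> (z - y)"
    and "\<And>j \<omega>. j \<in> {1..N} \<Longrightarrow> \<omega> \<in> space M \<Longrightarrow> continuous_on {t (j - 1)..t j} (\<lambda>s. W s \<omega>)"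
  shows "{\<omega>\<in>space M. \<exists>s\<in>{0..T}. xplan s + Rh *v W s \<omega> \<in> X}
           \<subseteq> (\<Union>j\<in>{1..N}. exc_event M Rh W (a j) (d j) (t (j - 1)) (t j))"
proof safe
  fix \<omega> s assume \<omega>: "\<omega> \<in> space M" and s: "s \<in> {0..T}" and hit: "xplan s + Rh *v W s \<omega> \<in> X"
  obtain j where j: "j \<in> {1..N}" "s \<in> {t (j - 1)..t j}" "xplan s \<in> closed_segment (xp (j - 1)) (xp j)"
    using piecewise_linear_path_in_segment[OF assms(1) _ _ assms(4)] s assms(2,3) by auto
  have "\<omega> \<in> exc_event M Rh W (a j) (d j) (t (j - 1)) (t j)"
    using assms(5)[OF j(1)] j(3) hit j(2) assms(6)[OF j(1) \<omega>] \<omega> by (rule exc_event_if_hits_obstacle)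
  with j(1) show "\<omega> \<in> (\<Union>j\<in>{1..N}. exc_event M Rh W (a j) (d j) (t (j - 1)) (t j))"
    by blast
qed

lemma (in finite_measure) measure_UN_le_sum_minus_adjacent_Int:
  assumes "\<And>j. j \<in> {1..n} \<Longrightarrow> A j \<in> sets M"
  shows "measure M (\<Union>j\<in>{1..n}. A j)
           \<le> (\<Sum>j=1..n. measure M (A j)) - (\<Sum>j=1..n-1. measure M (A j \<inter> A (Suc j)))"
  using assms
proof (induction n)
  case 0
  then show ?case by simp
next
  case (Suc n)
  show ?case
  proof (cases "n = 0")
    case False
    define U where "U = (\<Union>j\<in>{1..n}. A j)"
    have U: "U \<in> sets M" and A: "A (Suc n) \<in> sets M"
      using Suc.prems by (auto simp: U_def)
    have "measure M (\<Union>j\<in>{1..Suc n}. A j) = measure M (U \<union> A (Suc n))"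
      by (simp add: U_def atLeastAtMostSuc_conv Un_commute)
    also have "\<dots> = measure M U + measure M (A (Suc n)) - measure M (U \<inter> A (Suc n))"
      using U A by (intro measure_Un3) (auto simp: fmeasurable_eq_sets)
    also have "\<dots> \<le> measure M U + measure M (A (Suc n)) - measure M (A n \<inter> A (Suc n))"
    proof -
      have "A n \<inter> A (Suc n) \<subseteq> U \<inter> A (Suc n)"
        using False by (auto simp: U_def intro!: bexI[of _ n])
      then show ?thesis
        using U A by (simp add: finite_measure_mono)
    qed
    also have "\<dots> \<le> (\<Sum>j=1..Suc n. measure M (A j)) - (\<Sum>j=1..Suc n - 1. measure M (A j \<inter> A (Suc j)))"
      using Suc False by (cases n) (auto simp: U_def)
    finally show ?thesis .
  qed simp
qed

lemma (in prob_space) prob_compl_Int_compl: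
  assumes "A \<in> events" "B \<in> events"
  shows "prob ((space M - A) \<inter> (space M - B)) = 1 - prob A - prob B + prob (A \<inter> B)"
proof -
  have "prob ((space M - A) \<inter> (space M - B)) = 1 - prob (A \<union> B)"
    using assms by (simp add: Diff_Un[symmetric] prob_compl)
  also have "prob (A \<union> B) = prob A + prob B - prob (A \<inter> B)"
    using assms by (intro measure_Un3) (auto simp: fmeasurable_eq_sets)
  finally show ?thesis
    by simp
qed

lemma (in prob_space) prob_cover_chain_bounds:
  assumes "C \<subseteq> (\<Union>j\<in>{1..N}. E j)"
    and "\<And>j. j \<in> {1..N} \<Longrightarrow> E j \<in> events" "\<And>j. j \<in> {1..N} \<Longrightarrow> D j \<in> events"
    and "\<And>j. j \<in> {1..N} \<Longrightarrow> space M - D j \<subseteq> E j"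
  shows "prob C \<le> (\<Sum>j=1..N. prob (E j))"
    and "prob C \<le> (\<Sum>j=1..N. prob (E j))
                   - (\<Sum>j=1..N-1. 1 - prob (D j) - prob (D (Suc j)) + prob (D j \<inter> D (Suc j)))"
proof -
  have adjacent: "1 - prob (D j) - prob (D (Suc j)) + prob (D j \<inter> D (Suc j)) \<le> prob (E j \<inter> E (Suc j))"
    if "j \<in> {1..N-1}" for j
  proof -
    have j: "j \<in> {1..N}" "Suc j \<in> {1..N}"
      using that by auto
    have "prob ((space M - D j) \<inter> (space M - D (Suc j))) \<le> prob (E j \<inter> E (Suc j))"
      using assms(2-4)[OF j(1)] assms(2-4)[OF j(2)] by (intro finite_measure_mono) auto
    then show ?thesis
      using assms(3)[OF j(1)] assms(3)[OF j(2)] by (simp add: prob_compl_Int_compl)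
  qed
  have "prob C \<le> prob (\<Union>j\<in>{1..N}. E j)"
    using assms(1,2) by (intro finite_measure_mono) auto
  also have "\<dots> \<le> (\<Sum>j=1..N. prob (E j)) - (\<Sum>j=1..N-1. prob (E j \<inter> E (Suc j)))"
    using assms(2) by (rule measure_UN_le_sum_minus_adjacent_Int)
  finally have second: "prob C \<le> (\<Sum>j=1..N. prob (E j)) - (\<Sum>j=1..N-1. prob (E j \<inter> E (Suc j)))" .
  moreover have "0 \<le> (\<Sum>j=1..N-1. prob (E j \<inter> E (Suc j)))"
    by (simp add: sum_nonneg)
  ultimately show "prob C \<le> (\<Sum>j=1..N. prob (E j))"
    by linarith
  have "(\<Sum>j=1..N-1. 1 - prob (D j) - prob (D (Suc j)) + prob (D j \<inter> D (Suc j)))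
          \<le> (\<Sum>j=1..N-1. prob (E j \<inter> E (Suc j)))"
    using adjacent by (rule sum_mono)
  with second show "prob C \<le> (\<Sum>j=1..N. prob (E j))
                   - (\<Sum>j=1..N-1. 1 - prob (D j) - prob (D (Suc j)) + prob (D j \<inter> D (Suc j)))"
    by linarith
qed

theorem mainTheorem3:
  fixes M :: "'a measure" and W :: "real \<Rightarrow> 'a \<Rightarrow> real^'n"
    and Xobs :: "(real^'n) set" and N :: nat and T :: real
    and xp :: "nat \<Rightarrow> real^'n" and t :: "nat \<Rightarrow> real"
    and xplan :: "real \<Rightarrow> real^'n"
    and R Rh :: "real^'n^'n"
    and y1 y2 :: "nat \<Rightarrow> real^'n"
    and r :: "nat \<Rightarrow> nat" and th :: "nat \<Rightarrow> nat \<Rightarrow> real"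
    and d :: "nat \<Rightarrow> real" and a :: "nat \<Rightarrow> real^'n"
    and p :: "nat \<Rightarrow> real" and pLB :: "nat \<Rightarrow> real" and Risk :: real
  assumes obs: "Xobs \<noteq> {}" "compact Xobs" "convex Xobs"
    and N: "N \<ge> 1"
    and xp_ne: "\<forall>j\<in>{1..N}. xp j \<noteq> xp (j - 1)"
    and t0: "t 0 = 0" and tN: "t N = T" and t_mono: "\<forall>j<N. t j < t (Suc j)"
    and plan: "\<forall>j\<in>{1..N}. \<forall>s\<in>{t (j - 1)..t j}.
                 xplan s = xp (j - 1) + ((s - t (j - 1)) / (t j - t (j - 1))) *\<^sub>R (xp j - xp (j - 1))"
    and seg_free: "\<forall>j\<in>{1..N}. closed_segment (xp (j - 1)) (xp j) \<inter> Xobs = {}"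
    and BM: "std_brownian_motion M W"
    and R: "sym_pos_def R" and Rh: "sym_pos_def Rh" "Rh ** Rh = R"
    and minimizers: "\<forall>j\<in>{1..N}. y1 j \<in> Xobs \<and> y2 j \<in> closed_segment (xp (j - 1)) (xp j) \<and>
        (\<forall>z1\<in>Xobs. \<forall>z2\<in>closed_segment (xp (j - 1)) (xp j). norm (y1 j - y2 j) \<le> norm (z1 - z2))"
    and disc: "\<forall>j\<in>{1..N}. th j 0 = t (j - 1) \<and> th j (r j) = t j \<and> (\<forall>i<r j. th j i < th j (Suc i))"
  defines "d \<equiv> \<lambda>j. norm (y1 j - y2 j)"
    and "a \<equiv> \<lambda>j. (1 / d j) *\<^sub>R (y1 j - y2 j)"
    and "p \<equiv> \<lambda>j. measure M (exc_event M Rh W (a j) (d j) (t (j - 1)) (t j))"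
    and "pLB \<equiv> \<lambda>j. 1 - measure M (disc_event M Rh W (a j) (d j) (th j) (r j))
                    - measure M (disc_event M Rh W (a (Suc j)) (d (Suc j)) (th (Suc j)) (r (Suc j)))
                    + measure M (disc_event M Rh W (a j) (d j) (th j) (r j)
                                 \<inter> disc_event M Rh W (a (Suc j)) (d (Suc j)) (th (Suc j)) (r (Suc j)))"
    and "Risk \<equiv> measure M {\<omega>\<in>space M. \<exists>s\<in>{0..T}. xplan s + Rh *v W s \<omega> \<in> Xobs}"
  shows "Risk \<le> (\<Sum>j=1..N. p j) \<and> Risk \<le> (\<Sum>j=1..N. p j) - (\<Sum>j=1..N-1. pLB j)"
proof -
  have "prob_space M"
    and W_meas: "\<And>s. 0 \<le> s \<Longrightarrow> W s \<in> borel_measurable M"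
    and W_cont: "\<And>\<omega>. \<omega> \<in> space M \<Longrightarrow> continuous_on {0..} (\<lambda>s. W s \<omega>)"
    using BM by (auto simp: std_brownian_motion_def)
  then interpret prob_space M
    by simp
  have t_nonneg: "0 \<le> t j" if "j \<le> N" for j
    using lift_Suc_mono_le_upto[of N t 0 j] t_mono t0 that by fastforce
  have t_less: "t (j - 1) < t j" if "j \<in> {1..N}" for j
    using t_mono that by (cases j) auto
  have th_mem: "th j i \<in> {t (j - 1)..t j}" if "j \<in> {1..N}" "i \<le> r j" for j i
    using disc that lift_Suc_mono_le_upto[of "r j" "th j" 0 i] lift_Suc_mono_le_upto[of "r j" "th j" i "r j"]
    by fastforce
  have W_cont_segment: "continuous_on {t (j - 1)..t j} (\<lambda>s. W s \<omega>)" if "j \<in> {1..N}" "\<omega> \<in> space M" for j \<omega>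
    using that t_nonneg[of "j - 1"] by (intro continuous_on_subset[OF W_cont]) auto
  have separation: "d j \<le> a j \<bullet> (z - y)"
    if "j \<in> {1..N}" "z \<in> Xobs" "y \<in> closed_segment (xp (j - 1)) (xp j)" for j z y
    unfolding d_def a_def using that minimizers seg_free obs
    by (intro closest_pair_separation) (auto simp: compact_imp_closed Int_commute)
  define E where "E j = exc_event M Rh W (a j) (d j) (t (j - 1)) (t j)" for j
  define D where "D j = disc_event M Rh W (a j) (d j) (th j) (r j)" for j
  have "{\<omega>\<in>space M. \<exists>s\<in>{0..T}. xplan s + Rh *v W s \<omega> \<in> Xobs} \<subseteq> (\<Union>j\<in>{1..N}. E j)"
    unfolding E_def using N t0 tN plan separation W_cont_segment by (rule collision_subset_UN_exc_event)
  moreover have "E j \<in> events" "D j \<in> events" "space M - D j \<subseteq> E j" if j: "j \<in> {1..N}" for j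
  proof -
    have "0 \<le> t (j - 1)"
      using j by (intro t_nonneg) auto
    then show "E j \<in> events"
      unfolding E_def using t_less[OF j] by (rule exc_event_in_sets[OF _ _ W_meas W_cont])
    show "D j \<in> events"
      unfolding D_def using th_mem[OF j] \<open>0 \<le> t (j - 1)\<close>
      by (intro disc_event_in_sets[OF _ W_meas]) fastforce+
    show "space M - D j \<subseteq> E j"
      unfolding D_def E_def using th_mem[OF j] W_cont_segment[OF j]
      by (rule space_diff_disc_event_subset_exc_event)
  qed
  ultimately show ?thesis
    unfolding Risk_def p_def pLB_def E_def[symmetric] D_def[symmetric] by (blast intro: prob_cover_chain_bounds)
qed

end
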